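(* Let $m\ge 1$ and $1\le k_1<k_2$ be integers with $k_1+1-m>0$, and let $L>0$, $C_{k_1}>0$, $C_{k_2}>0$ be real constants. For $h>0$ and $i=1,2$ set $$\beta_{k_i}(h)=\min\left(L,\;C_{k_i}h^{k_i+1-m}\right),$$ and let $X^{(k_1)}$, $X^{(k_2)}$ be independent random variables with $X^{(k_i)}$ uniformly distributed on $[0,\beta_{k_i}(h)]$. Define $$h^*_{k_1,k_2}=\left(\frac{C_{k_1}}{C_{k_2}}\right)^{\frac{1}{k_2-k_1}},\qquad \hslash_{k_i}=\left(\frac{L}{C_{k_i}}\right)^{\frac{1}{k_i+1-m}}\ (i=1,2),$$ and $\mathcal{P}_{k_1,k_2}(h)=\mathrm{Prob}\{X^{(k_1)}\le X^{(k_2)}\}$. Then: (i) If $h^*_{k_1,k_2}\ge\max(\hslash_{k_1},\hslash_{k_2})$, then $\hslash_{k_1}\le\hslash_{k_2}$ and $$\mathcal{P}_{k_1,k_2}(h)=\begin{cases}\dfrac12\left(\dfrac{h}{h^*_{k_1,k_2}}\right)^{k_2-k_1} & \text{if } 0< h\le\hslash_{k_1},\\[2mm] \dfrac12\left(\dfrac{h}{\hslash_{k_2}}\right)^{k_2+1-m} & \text{if } \hslash_{k_1}\le h\le\hslash_{k_2},\\[2mm] \dfrac12 & \text{if } h\ge\hslash_{k_2}.\end{cases}$$ (ii) If $h^*_{k_1,k_2}\le\min(\hslash_{k_1},\hslash_{k_2})$, then $\hslash_{k_2}\le\hslash_{k_1}$ and $$\mathcal{P}_{k_1,k_2}(h)=\begin{cases}\dfrac12\left(\dfrac{h}{h^*_{k_1,k_2}}\right)^{k_2-k_1}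 & \text{if } 0< h\le h^*_{k_1,k_2},\\[2mm] 1-\dfrac12\left(\dfrac{h^*_{k_1,k_2}}{h}\right)^{k_2-k_1} & \text{if } h^*_{k_1,k_2}\le h\le\hslash_{k_2},\\[2mm] 1-\dfrac12\left(\dfrac{h}{\hslash_{k_1}}\right)^{k_1+1-m} & \text{if } \hslash_{k_2}\le h\le\hslash_{k_1},\\[2mm] \dfrac12 & \text{if } h\ge\hslash_{k_1}.\end{cases}$$
   Context: In the paper, $h$ is the mesh size of a finite element mesh, $X^{(k_i)}=\|u-u_h^{(k_i)}\|_{m,p,\Omega}$ is the $W^{m,p}$ error of the $P_{k_i}$ Lagrange finite element approximation of the solution $u$ of a variational problem, $L=\|l\|_{V'}/\alpha^*$ comes from a priori stability bounds, and $C_{k_i}=\mathscr{C}_{k_i}|u|_{k_i+1,p,\Omega}$ comes from the interpolation error estimate, so that $\beta_{k_i}(h)$ is the resulting upper bound on the error; the two errors are modeled as independent uniform random variables on $[0,\beta_{k_i}(h)]$. *)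

theory Defs
  imports "HOL-Probability.Probability"
begin

definition beta_bound :: "real \<Rightarrow> real \<Rightarrow> nat \<Rightarrow> nat \<Rightarrow> real \<Rightarrow> real" where
  "beta_bound L C k m h = min L (C * h ^ (k + 1 - m))"

definition indep_uniform_pair ::
  "'a measure \<Rightarrow> ('a \<Rightarrow> real) \<Rightarrow> ('a \<Rightarrow> real) \<Rightarrow> real \<Rightarrow> real \<Rightarrow> bool" where
  "indep_uniform_pair M X1 X2 b1 b2 \<longleftrightarrow>
     prob_space M \<and> X1 \<in> borel_measurable M \<and> X2 \<in> borel_measurable M \<and>
     distr M lborel X1 = uniform_measure lborel {0..b1} \<and>
     distr M lborel X2 = uniform_measure lborel {0..b2} \<and>
     prob_space.indep_var M borel X1 borel X2"

definition prob_le :: "'a measure \<Rightarrow> ('a \<Rightarrow> real) \<Rightarrow> ('a \<Rightarrow> real) \<Rightarrow> real" where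
  "prob_le M X1 X2 = measure M {\<omega> \<in> space M. X1 \<omega> \<le> X2 \<omega>}"

end

theory Submission
  imports Defs
begin

text \<open>For independent X1 uniform on [0, a] and X2 uniform on [0, b], Fubini gives
  Prob{X1 <= X2} = 1 - a/(2b) if a <= b and b/(2a) otherwise. Writing C h^n = L (h/t)^n where
  t^n = L/C, each bound beta_i(h) is the power law C_i h^(k_i+1-m) below its threshold hbar_i and
  L above it, while C_2 h^(k_2+1-m) = C_1 h^(k_1+1-m) (h/h* )^(k_2-k_1), so h* decides which of the
  two power laws is smaller. Every regime of the theorem is one branch of the formula with the
  active bounds substituted; the hypotheses on h* only fix the order of the three thresholds.\<close>

definition uniform_le_prob :: "real \<Rightarrow> real \<Rightarrow> real" where
  "uniform_le_prob a b = (if a \<le> b then 1 - a / (2 * b) else b / (2 * a))"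

lemma uniform_le_prob_le: "a \<le> b \<Longrightarrow> uniform_le_prob a b = 1 - a / (2 * b)"
  unfolding uniform_le_prob_def by simp

lemma uniform_le_prob_ge: "0 < b \<Longrightarrow> b \<le> a \<Longrightarrow> uniform_le_prob a b = b / (2 * a)"
  unfolding uniform_le_prob_def by auto

lemma uniform_le_prob_self: "0 < a \<Longrightarrow> uniform_le_prob a a = 1 / 2"
  by (simp add: uniform_le_prob_ge)

lemma sets_pair_borel_fst_le_snd: "{p :: real \<times> real. fst p \<le> snd p} \<in> sets (borel \<Otimes>\<^sub>M borel)"
proof -
  have "{p \<in> space (borel \<Otimes>\<^sub>M borel). fst p \<le> snd p} \<in> sets (borel \<Otimes>\<^sub>M (borel :: real measure))"
    by measurable
  then show ?thesis
    by (simp add: space_pair_measure)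
qed

lemma nn_integral_linear_Icc:
  fixes b c :: real
  assumes "0 \<le> c" "c \<le> b" "0 < b"
  shows "(\<integral>\<^sup>+x. ennreal ((b - x) / b) * indicator {0..c} x \<partial>lborel) = ennreal ((b * c - c\<^sup>2 / 2) / b)"
proof -
  have "((\<lambda>x. (b - x) / b) has_integral ((b * c - c\<^sup>2 / 2) / b - (b * 0 - 0\<^sup>2 / 2) / b)) {0..c}"
    by (rule fundamental_theorem_of_calculus[OF assms(1)])
      (use assms in \<open>auto intro!: derivative_eq_intros simp: power2_eq_square field_simps\<close>)
  then show ?thesis
    using assms by (intro nn_integral_has_integral_lebesgue') auto
qed

lemma emeasure_uniform_pair_fst_le_snd:
  fixes a b :: real
  assumes a: "0 < a" and b: "0 < b"
  shows "emeasure (uniform_measure lborel {0..a} \<Otimes>\<^sub>M uniform_measure lborel {0..b}) {p. fst p \<le> snd p}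
    = ennreal (uniform_le_prob a b)"
proof -
  interpret U_b: prob_space "uniform_measure lborel {0..b}"
    using b by (intro prob_space_uniform_measure) auto
  define survival where "survival x = ennreal (max 0 (b - max 0 x) / b)" for x :: real
  have survival_eq: "emeasure (uniform_measure lborel {0..b}) {x..} = survival x" for x
  proof -
    have "emeasure lborel ({0..b} \<inter> {x..}) = ennreal (max 0 (b - max 0 x))"
    proof -
      have "{0..b} \<inter> {x..} = {max 0 x..b}"
        by auto
      then show ?thesis
        by (simp add: emeasure_lborel_Icc_eq max_def)
    qed
    then have "emeasure (uniform_measure lborel {0..b}) {x..} = ennreal (max 0 (b - max 0 x)) / ennreal b"
      using b by (simp only: emeasure_uniform_measure sets_lborel atLeastAtMost_borel atLeast_borel) simp
    also have "\<dots> = survival x"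
      using b unfolding survival_def by (intro divide_ennreal) auto
    finally show ?thesis .
  qed
  have "emeasure (uniform_measure lborel {0..a} \<Otimes>\<^sub>M uniform_measure lborel {0..b}) {p. fst p \<le> snd p}
      = (\<integral>\<^sup>+x. emeasure (uniform_measure lborel {0..b}) (Pair x -` {p. fst p \<le> snd p})
          \<partial>uniform_measure lborel {0..a})"
    by (rule U_b.emeasure_pair_measure_alt) (use sets_pair_borel_fst_le_snd in simp)
  also have "\<dots> = (\<integral>\<^sup>+x. survival x \<partial>uniform_measure lborel {0..a})"
  proof -
    have "Pair x -` {p. fst p \<le> snd p} = {x..}" for x :: real
      by auto
    then show ?thesis
      by (simp only: survival_eq)
  qed
  also have "\<dots> = (\<integral>\<^sup>+x. survival x * indicator {0..a} x \<partial>lborel) / ennreal a"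
  proof -
    have "survival \<in> borel_measurable borel"
      unfolding survival_def by measurable
    then show ?thesis
      using a by (subst nn_integral_uniform_measure) auto
  qed
  also have "(\<integral>\<^sup>+x. survival x * indicator {0..a} x \<partial>lborel)
      = (\<integral>\<^sup>+x. ennreal ((b - x) / b) * indicator {0..min a b} x \<partial>lborel)"
    by (rule nn_integral_cong) (auto simp: survival_def indicator_def)
  also have "\<dots> = ennreal ((b * min a b - (min a b)\<^sup>2 / 2) / b)"
    using a b by (intro nn_integral_linear_Icc) auto
  also have "\<dots> / ennreal a = ennreal (uniform_le_prob a b)"
    using a b by (auto simp: divide_ennreal uniform_le_prob_def min_def field_simps power2_eq_square)
  finally show ?thesis .
qed

lemma prob_le_indep_uniform:
  assumes H: "indep_uniform_pair M X1 X2 a b" and "0 < a" "0 < b"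
  shows "prob_le M X1 X2 = uniform_le_prob a b"
proof -
  interpret prob_space M
    using H unfolding indep_uniform_pair_def by auto
  have [measurable]: "X1 \<in> borel_measurable M" "X2 \<in> borel_measurable M"
    and "distr M lborel X1 = uniform_measure lborel {0..a}"
    and "distr M lborel X2 = uniform_measure lborel {0..b}"
    and indep: "indep_var borel X1 borel X2"
    using H unfolding indep_uniform_pair_def by auto
  then have "distr M borel X1 = uniform_measure lborel {0..a}"
    and "distr M borel X2 = uniform_measure lborel {0..b}"
    by (metis distr_cong sets_lborel)+
  with indep have joint: "distr M (borel \<Otimes>\<^sub>M borel) (\<lambda>x. (X1 x, X2 x))
      = uniform_measure lborel {0..a} \<Otimes>\<^sub>M uniform_measure lborel {0..b}"
    by (simp add: indep_var_distribution_eq)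
  have "prob_le M X1 X2 = prob ((\<lambda>x. (X1 x, X2 x)) -` {p. fst p \<le> snd p} \<inter> space M)"
    unfolding prob_le_def by (rule arg_cong[where f = prob]) auto
  also have "\<dots> = measure (distr M (borel \<Otimes>\<^sub>M borel) (\<lambda>x. (X1 x, X2 x))) {p. fst p \<le> snd p}"
    using sets_pair_borel_fst_le_snd by (intro measure_distr[symmetric]) auto
  also have "\<dots> = uniform_le_prob a b"
    using assms(2,3) unfolding joint measure_def
    by (simp add: emeasure_uniform_pair_fst_le_snd uniform_le_prob_def)
  finally show ?thesis .
qed

lemma power_eq_scaled_power:
  fixes C L t h :: real
  assumes "0 < C" "0 < t" "t ^ n = L / C"
  shows "C * h ^ n = L * (h / t) ^ n"
  using assms by (simp add: power_divide field_simps)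

lemma mult_power_le_self_iff:
  fixes c h t :: real
  assumes "0 < c" "0 \<le> h" "0 < t" "0 < n"
  shows "c * (h / t) ^ n \<le> c \<longleftrightarrow> h \<le> t"
proof -
  have "c * (h / t) ^ n \<le> c \<longleftrightarrow> (h / t) ^ n \<le> 1 ^ n"
    using assms(1) by simp
  also have "\<dots> \<longleftrightarrow> h / t \<le> 1"
    using assms by (intro power_mono_iff) auto
  also have "\<dots> \<longleftrightarrow> h \<le> t"
    using assms(3) by simp
  finally show ?thesis .
qed

lemma self_le_mult_power_iff:
  fixes c h t :: real
  assumes "0 < c" "0 \<le> h" "0 < t" "0 < n"
  shows "c \<le> c * (h / t) ^ n \<longleftrightarrow> t \<le> h"
proof -
  have "c \<le> c * (h / t) ^ n \<longleftrightarrow> 1 ^ n \<le> (h / t) ^ n"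
    using assms(1) by simp
  also have "\<dots> \<longleftrightarrow> 1 \<le> h / t"
    using assms by (intro power_mono_iff) auto
  also have "\<dots> \<longleftrightarrow> t \<le> h"
    using assms(3) by simp
  finally show ?thesis .
qed

text \<open>Here p = k1 + 1 - m, p + d = k2 + 1 - m, and hs, hb1, hb2 are h*, hbar_k1, hbar_k2.\<close>

locale two_power_bounds =
  fixes L C1 C2 :: real and p d :: nat and hs hb1 hb2 :: real
  assumes L_pos: "0 < L" and C1_pos: "0 < C1" and C2_pos: "0 < C2"
    and p_pos: "0 < p" and d_pos: "0 < d"
    and hs_pos: "0 < hs" and hb1_pos: "0 < hb1" and hb2_pos: "0 < hb2"
    and hs_power: "hs ^ d = C1 / C2"
    and hb1_power: "hb1 ^ p = L / C1"
    and hb2_power: "hb2 ^ (p + d) = L / C2"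
begin

definition le_prob :: "real \<Rightarrow> real" where
  "le_prob h = uniform_le_prob (min L (C1 * h ^ p)) (min L (C2 * h ^ (p + d)))"

lemma bound2_eq_bound1: "C2 * h ^ (p + d) = C1 * h ^ p * (h / hs) ^ d"
  using power_eq_scaled_power[OF C2_pos hs_pos hs_power, of h] by (simp add: power_add)

lemma bound1_le_iff: "0 < h \<Longrightarrow> C1 * h ^ p \<le> L \<longleftrightarrow> h \<le> hb1"
  using power_eq_scaled_power[OF C1_pos hb1_pos hb1_power]
    mult_power_le_self_iff[OF L_pos _ hb1_pos p_pos] by simp

lemma bound2_le_iff: "0 < h \<Longrightarrow> C2 * h ^ (p + d) \<le> L \<longleftrightarrow> h \<le> hb2"
  using power_eq_scaled_power[OF C2_pos hb2_pos hb2_power]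
    mult_power_le_self_iff[OF L_pos _ hb2_pos, where n = "p + d"] p_pos by simp

lemma le_bound1_iff: "0 < h \<Longrightarrow> L \<le> C1 * h ^ p \<longleftrightarrow> hb1 \<le> h"
  using power_eq_scaled_power[OF C1_pos hb1_pos hb1_power]
    self_le_mult_power_iff[OF L_pos _ hb1_pos p_pos] by simp

lemma le_bound2_iff: "0 < h \<Longrightarrow> L \<le> C2 * h ^ (p + d) \<longleftrightarrow> hb2 \<le> h"
  using power_eq_scaled_power[OF C2_pos hb2_pos hb2_power]
    self_le_mult_power_iff[OF L_pos _ hb2_pos, where n = "p + d"] p_pos by simp

lemma bound2_le_bound1_iff: "0 < h \<Longrightarrow> C2 * h ^ (p + d) \<le> C1 * h ^ p \<longleftrightarrow> h \<le> hs"
  using mult_power_le_self_iff[of "C1 * h ^ p" h hs d] C1_pos hs_pos d_pos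
  by (simp add: bound2_eq_bound1)

lemma bound1_le_bound2_iff: "0 < h \<Longrightarrow> C1 * h ^ p \<le> C2 * h ^ (p + d) \<longleftrightarrow> hs \<le> h"
  using self_le_mult_power_iff[of "C1 * h ^ p" h hs d] C1_pos hs_pos d_pos
  by (simp add: bound2_eq_bound1)

lemma hb1_le_hb2_if_le_hs: "hb1 \<le> hs \<Longrightarrow> hb1 \<le> hb2"
  using bound2_le_bound1_iff[OF hb1_pos] bound1_le_iff[OF hb1_pos] bound2_le_iff[OF hb1_pos]
  by linarith

lemma hb2_le_hb1_if_ge_hs: "hs \<le> hb2 \<Longrightarrow> hb2 \<le> hb1"
  using bound1_le_bound2_iff[OF hb2_pos] bound2_le_iff[OF hb2_pos] bound1_le_iff[OF hb2_pos]
  by linarith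

lemma le_prob_below_hb1_hs:
  assumes "0 < h" "h \<le> hb1" "h \<le> hs"
  shows "le_prob h = 1/2 * (h / hs) ^ d"
proof -
  have "C1 * h ^ p \<le> L" and less: "C2 * h ^ (p + d) \<le> C1 * h ^ p"
    using assms bound1_le_iff bound2_le_bound1_iff by auto
  then have "le_prob h = uniform_le_prob (C1 * h ^ p) (C2 * h ^ (p + d))"
    unfolding le_prob_def by simp
  also have "\<dots> = C2 * h ^ (p + d) / (2 * (C1 * h ^ p))"
    using less assms(1) C2_pos by (intro uniform_le_prob_ge) auto
  also have "\<dots> = 1/2 * (h / hs) ^ d"
    using assms(1) C1_pos by (simp add: bound2_eq_bound1)
  finally show ?thesis .
qed

lemma le_prob_between_hb1_hb2:
  assumes "hb1 \<le> h" "h \<le> hb2"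
  shows "le_prob h = 1/2 * (h / hb2) ^ (p + d)"
proof -
  have h: "0 < h"
    using assms(1) hb1_pos by linarith
  then have "L \<le> C1 * h ^ p" and less: "C2 * h ^ (p + d) \<le> L"
    using assms le_bound1_iff bound2_le_iff by auto
  then have "le_prob h = uniform_le_prob L (C2 * h ^ (p + d))"
    unfolding le_prob_def by simp
  also have "\<dots> = C2 * h ^ (p + d) / (2 * L)"
    using less h C2_pos by (intro uniform_le_prob_ge) auto
  also have "\<dots> = 1/2 * (h / hb2) ^ (p + d)"
    using power_eq_scaled_power[OF C2_pos hb2_pos hb2_power] L_pos by simp
  finally show ?thesis .
qed

lemma le_prob_between_hs_hb2:
  assumes "hs \<le> h" "h \<le> hb2"
  shows "le_prob h = 1 - 1/2 * (hs / h) ^ d"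
proof -
  have h: "0 < h"
    using assms(1) hs_pos by linarith
  then have less: "C1 * h ^ p \<le> C2 * h ^ (p + d)" and "C2 * h ^ (p + d) \<le> L"
    using assms bound1_le_bound2_iff bound2_le_iff by auto
  then have "le_prob h = uniform_le_prob (C1 * h ^ p) (C2 * h ^ (p + d))"
    unfolding le_prob_def by simp
  also have "\<dots> = 1 - C1 * h ^ p / (2 * (C2 * h ^ (p + d)))"
    using less by (rule uniform_le_prob_le)
  also have "\<dots> = 1 - 1/2 * (hs / h) ^ d"
    using h hs_pos C1_pos by (simp add: bound2_eq_bound1 power_divide)
  finally show ?thesis .
qed

lemma le_prob_between_hb2_hb1:
  assumes "hb2 \<le> h" "h \<le> hb1"
  shows "le_prob h = 1 - 1/2 * (h / hb1) ^ p"
proof -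
  have h: "0 < h"
    using assms(1) hb2_pos by linarith
  then have less: "C1 * h ^ p \<le> L" and "L \<le> C2 * h ^ (p + d)"
    using assms bound1_le_iff le_bound2_iff by auto
  then have "le_prob h = uniform_le_prob (C1 * h ^ p) L"
    unfolding le_prob_def by simp
  also have "\<dots> = 1 - C1 * h ^ p / (2 * L)"
    using less by (rule uniform_le_prob_le)
  also have "\<dots> = 1 - 1/2 * (h / hb1) ^ p"
    using power_eq_scaled_power[OF C1_pos hb1_pos hb1_power] L_pos by simp
  finally show ?thesis .
qed

lemma le_prob_above_hb1_hb2:
  assumes "hb1 \<le> h" "hb2 \<le> h"
  shows "le_prob h = 1/2"
proof -
  have "0 < h"
    using assms(1) hb1_pos by linarith
  then have "L \<le> C1 * h ^ p" "L \<le> C2 * h ^ (p + d)"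
    using assms le_bound1_iff le_bound2_iff by auto
  then show ?thesis
    unfolding le_prob_def using L_pos by (simp add: uniform_le_prob_self)
qed

end

theorem theorem2:
  fixes m k1 k2 :: nat and L C1 C2 :: real
  assumes "m \<ge> 1" and "1 \<le> k1" and "k1 < k2" and "k1 + 1 > m"
    and "L > 0" and "C1 > 0" and "C2 > 0"
  defines "hs \<equiv> (C1 / C2) powr (1 / (real k2 - real k1))"
    and "hb1 \<equiv> (L / C1) powr (1 / (real k1 + 1 - real m))"
    and "hb2 \<equiv> (L / C2) powr (1 / (real k2 + 1 - real m))"
  shows
    "(hs \<ge> max hb1 hb2 \<longrightarrow>
        hb1 \<le> hb2 \<and>
        (\<forall>h (M :: 'a measure) X1 X2. h > 0 \<longrightarrow>
           indep_uniform_pair M X1 X2 (beta_bound L C1 k1 m h) (beta_bound L C2 k2 m h) \<longrightarrow>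
             (h \<le> hb1 \<longrightarrow> prob_le M X1 X2 = 1/2 * (h / hs) ^ (k2 - k1)) \<and>
             (hb1 \<le> h \<and> h \<le> hb2 \<longrightarrow> prob_le M X1 X2 = 1/2 * (h / hb2) ^ (k2 + 1 - m)) \<and>
             (h \<ge> hb2 \<longrightarrow> prob_le M X1 X2 = 1/2)))
     \<and>
     (hs \<le> min hb1 hb2 \<longrightarrow>
        hb2 \<le> hb1 \<and>
        (\<forall>h (M :: 'a measure) X1 X2. h > 0 \<longrightarrow>
           indep_uniform_pair M X1 X2 (beta_bound L C1 k1 m h) (beta_bound L C2 k2 m h) \<longrightarrow>
             (h \<le> hs \<longrightarrow> prob_le M X1 X2 = 1/2 * (h / hs) ^ (k2 - k1)) \<and>
             (hs \<le> h \<and> h \<le> hb2 \<longrightarrow> prob_le M X1 X2 = 1 - 1/2 * (hs / h) ^ (k2 - k1)) \<and>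
             (hb2 \<le> h \<and> h \<le> hb1 \<longrightarrow> prob_le M X1 X2 = 1 - 1/2 * (h / hb1) ^ (k1 + 1 - m)) \<and>
             (h \<ge> hb1 \<longrightarrow> prob_le M X1 X2 = 1/2)))"
proof -
  define p d where "p = k1 + 1 - m" and "d = k2 - k1"
  have exponents: "real k2 - real k1 = real d" "real k1 + 1 - real m = real p"
      "real k2 + 1 - real m = real (p + d)" "k2 + 1 - m = p + d"
    using assms(3,4) by (auto simp: p_def d_def)
  have "0 < p" "0 < d"
    using assms(3,4) by (auto simp: p_def d_def)
  then have roots: "hs = root d (C1 / C2)" "hb1 = root p (L / C1)" "hb2 = root (p + d) (L / C2)"
    unfolding hs_def hb1_def hb2_def exponents using assms(5-7) by (auto simp: root_powr_inverse)
  interpret two_power_bounds L C1 C2 p d hs hb1 hb2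
    unfolding roots using \<open>0 < p\<close> \<open>0 < d\<close> assms(5-7) by unfold_locales (auto simp: real_root_pow_pos)
  have prob: "prob_le M X1 X2 = le_prob h"
    if "0 < h" "indep_uniform_pair M X1 X2 (beta_bound L C1 k1 m h) (beta_bound L C2 k2 m h)"
    for h and M :: "'a measure" and X1 X2
    using prob_le_indep_uniform[OF that(2)] that(1) assms(5-7)
    unfolding beta_bound_def le_prob_def p_def[symmetric] exponents(4) by simp
  show ?thesis
    unfolding exponents p_def[symmetric] d_def[symmetric]
    using hb1_le_hb2_if_le_hs hb2_le_hb1_if_ge_hs le_prob_below_hb1_hs le_prob_between_hb1_hb2
      le_prob_between_hs_hb2 le_prob_between_hb2_hb1 le_prob_above_hb1_hb2
    by (auto simp: prob)
qed

end
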